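(* Let $u$ and $v$ be non-constant entire functions such that ${\rm Aut}(v)$ is a subgroup of ${\rm Aut}(u)$. Then there exists a function $h$, holomorphic on $v(\mathbb{C})$, such that $u(z)=h(v(z))$ for all $z\in\mathbb{C}$.
   Context: For a non-constant entire function $f$, an automorphic function of $f$ is a (generally multivalued) analytic function $\phi$, or a single-valued branch of one on a domain, satisfying the automorphic equation $f(\phi(z))=f(z)$; these are the branches of $f^{-1}\circ f$. ${\rm Aut}(f)$ denotes the set of all automorphic functions of $f$, which is a group under composition (Shimizu's automorphic group). For any $z,w$ with $f(z)=f(w)$ there is $\phi\in{\rm Aut}(f)$ with $\phi(z)=w$. "${\rm Aut}(v)$ is a subgroup of ${\rm Aut}(u)$" means every automorphic function of $v$ is an automorphic function of $u$. *)

theory Defs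
  imports "HOL-Complex_Analysis.Complex_Analysis"
begin

definition automorphic_branch ::
  "(complex \<Rightarrow> complex) \<Rightarrow> complex set \<Rightarrow> (complex \<Rightarrow> complex) \<Rightarrow> bool" where
  "automorphic_branch f D \<phi> \<longleftrightarrow>
     open D \<and> connected D \<and> D \<noteq> {} \<and> \<phi> holomorphic_on D \<and> (\<forall>z\<in>D. f (\<phi> z) = f z)"

text \<open>Aut(v) is a subgroup of Aut(u): every automorphic function of v is one of u.\<close>
definition Aut_sub :: "(complex \<Rightarrow> complex) \<Rightarrow> (complex \<Rightarrow> complex) \<Rightarrow> bool" where
  "Aut_sub v u \<longleftrightarrow> (\<forall>D \<phi>. automorphic_branch v D \<phi> \<longrightarrow> automorphic_branch u D \<phi>)"

end

theory Submission
  imports Defs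
begin

text \<open>Setting \<open>h (v z) := u z\<close> is legitimate once \<open>u\<close> is constant on the fibres of \<open>v\<close>. If
  \<open>v z = v w\<close> and \<open>v' w \<noteq> 0\<close>, a local inverse of \<open>v\<close> near \<open>w\<close> composed with \<open>v\<close> near \<open>z\<close> is an
  automorphic branch of \<open>v\<close> sending \<open>z\<close> to \<open>w\<close>; being automorphic for \<open>u\<close> as well, it gives
  \<open>u z = u w\<close>. Critical points of \<open>v\<close> are isolated and \<open>v\<close> is an open map, so every pair in a
  fibre is a limit of such regular pairs, and continuity of \<open>u\<close> does the rest. Near a regular
  value \<open>h\<close> is \<open>u\<close> composed with a local inverse, hence holomorphic; it is continuous everywhere
  because \<open>v\<close> is open, so the isolated critical values are removable singularities.\<close>

lemma entire_eventually_neq: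
  fixes f :: "complex \<Rightarrow> complex"
  assumes "f holomorphic_on UNIV" and "f \<beta> \<noteq> c"
  shows "\<forall>\<^sub>F w in at z. f w \<noteq> c"
proof -
  have "(\<lambda>w. f w - c) holomorphic_on UNIV"
    using assms(1) by (intro holomorphic_intros)
  from non_zero_neighbour_alt[OF this open_UNIV connected_UNIV UNIV_I UNIV_I, of \<beta>] assms(2)
  show ?thesis by (simp add: eventually_mono)
qed

lemma entire_nonconstant_critical_points_isolated:
  fixes v :: "complex \<Rightarrow> complex" and a :: complex
  assumes hv: "v holomorphic_on UNIV" and nc: "\<not> (\<exists>c. \<forall>z. v z = c)"
  obtains \<rho> where "\<rho> > 0" "\<And>\<zeta>. \<zeta> \<noteq> a \<Longrightarrow> dist \<zeta> a < \<rho> \<Longrightarrow> deriv v \<zeta> \<noteq> 0"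
proof -
  obtain \<beta> where "deriv v \<beta> \<noteq> 0"
  proof (rule ccontr)
    assume "\<not> thesis"
    with that have "(v has_field_derivative 0) (at x within UNIV)" for x
      using hv DERIV_deriv_iff_field_differentiable holomorphic_on_imp_differentiable_at
      by (metis UNIV_I open_UNIV)
    then have "\<exists>c. \<forall>x\<in>UNIV. v x = c"
      by (intro has_field_derivative_zero_constant) auto
    with nc show False by auto
  qed
  then have "\<forall>\<^sub>F \<zeta> in at a. deriv v \<zeta> \<noteq> 0"
    by (rule entire_eventually_neq[OF holomorphic_deriv[OF hv open_UNIV]])
  with that show thesis
    unfolding eventually_at by blast
qed

lemma entire_nonconstant_open_image:
  fixes v :: "complex \<Rightarrow> complex"
  assumes "v holomorphic_on UNIV" and "\<not> (\<exists>c. \<forall>z. v z = c)" and "open U"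
  shows "open (v ` U)"
  using assms by (intro open_mapping_thm[of v UNIV]) (auto simp: constant_on_def)

lemma holomorphic_local_inverse:
  fixes v :: "complex \<Rightarrow> complex"
  assumes hv: "v holomorphic_on S" and "open S" "w \<in> S" and "deriv v w \<noteq> 0"
  obtains r g where "r > 0" "ball w r \<subseteq> S" "open (v ` ball w r)"
    "g holomorphic_on v ` ball w r" "\<And>\<zeta>. \<zeta> \<in> ball w r \<Longrightarrow> g (v \<zeta>) = \<zeta>"
proof -
  obtain r where r: "r > 0" "ball w r \<subseteq> S" "inj_on v (ball w r)"
    using has_complex_derivative_locally_injective[OF hv \<open>w \<in> S\<close> \<open>open S\<close> \<open>deriv v w \<noteq> 0\<close>] .
  have "v holomorphic_on ball w r"
    using hv r(2) holomorphic_on_subset by blast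
  with r that show thesis
    by (metis holomorphic_has_inverse open_ball open_mapping_thm3)
qed

lemma Aut_sub_eq_at_regular_point:
  fixes u v :: "complex \<Rightarrow> complex"
  assumes hv: "v holomorphic_on UNIV" and A: "Aut_sub v u"
    and vzw: "v z = v w" and reg: "deriv v w \<noteq> 0"
  shows "u z = u w"
proof -
  obtain r g where r: "r > 0" and oV: "open (v ` ball w r)"
    and g: "g holomorphic_on v ` ball w r" "\<And>\<zeta>. \<zeta> \<in> ball w r \<Longrightarrow> g (v \<zeta>) = \<zeta>"
    using holomorphic_local_inverse[OF hv open_UNIV UNIV_I reg] by metis
  have "open (v -` (v ` ball w r))"
    using oV hv holomorphic_on_imp_continuous_on open_vimage by blast
  moreover have "z \<in> v -` (v ` ball w r)"
    using vzw r by auto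
  ultimately obtain s where s: "s > 0" "ball z s \<subseteq> v -` (v ` ball w r)"
    using openE by blast
  have "automorphic_branch v (ball z s) (g \<circ> v)"
    unfolding automorphic_branch_def
  proof (intro conjI ballI)
    show "g \<circ> v holomorphic_on ball z s"
      using s(2) hv g(1) holomorphic_on_subset
      by (intro holomorphic_on_compose_gen[where t = "v ` ball w r"]) auto
    show "v ((g \<circ> v) \<zeta>) = v \<zeta>" if "\<zeta> \<in> ball z s" for \<zeta>
      using s(2) that g(2) by auto
  qed (use s in auto)
  then have "automorphic_branch u (ball z s) (g \<circ> v)"
    using A unfolding Aut_sub_def by blast
  then have "u (g (v z)) = u z"
    using s(1) unfolding automorphic_branch_def by simp
  moreover have "g (v z) = w"
    using g(2) vzw r by simp
  ultimately show ?thesis by simp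
qed

lemma regular_fibre_pairs_nearby:
  fixes v :: "complex \<Rightarrow> complex"
  assumes hv: "v holomorphic_on UNIV" and nc: "\<not> (\<exists>c. \<forall>z. v z = c)"
    and vzw: "v z = v w" and "\<epsilon> > 0"
  obtains z' w' where "dist z' z < \<epsilon>" "dist w' w < \<epsilon>" "v z' = v w'" "deriv v w' \<noteq> 0"
proof -
  obtain r0 where r0: "r0 > 0" "\<And>\<zeta>. \<zeta> \<noteq> w \<Longrightarrow> dist \<zeta> w < r0 \<Longrightarrow> deriv v \<zeta> \<noteq> 0"
    using entire_nonconstant_critical_points_isolated[OF hv nc, where a = w] by blast
  define V where "V = v ` ball w (min \<epsilon> r0)"
  have "open V"
    unfolding V_def by (rule entire_nonconstant_open_image[OF hv nc open_ball])
  moreover have "v z \<in> V"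
    unfolding V_def using vzw r0(1) \<open>\<epsilon> > 0\<close> by simp
  moreover have "isCont v z"
    using hv holomorphic_on_imp_continuous_on continuous_on_eq_continuous_at by blast
  ultimately have "\<forall>\<^sub>F \<zeta> in at z. v \<zeta> \<in> V"
    by (simp add: continuous_at topological_tendstoD)
  moreover obtain \<gamma> where "v \<gamma> \<noteq> v z"
    using nc by blast
  then have "\<forall>\<^sub>F \<zeta> in at z. v \<zeta> \<noteq> v z"
    by (rule entire_eventually_neq[OF hv])
  moreover have "\<forall>\<^sub>F \<zeta> in at z. dist \<zeta> z < \<epsilon>"
    using \<open>\<epsilon> > 0\<close> unfolding eventually_at by blast
  ultimately have "\<forall>\<^sub>F \<zeta> in at z. v \<zeta> \<in> V \<and> v \<zeta> \<noteq> v z \<and> dist \<zeta> z < \<epsilon>"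
    by (intro eventually_conj)
  then obtain z' where z': "v z' \<in> V" "v z' \<noteq> v z" "dist z' z < \<epsilon>"
    using eventually_happens trivial_limit_at by blast
  then obtain w' where w': "w' \<in> ball w (min \<epsilon> r0)" "v z' = v w'"
    unfolding V_def by auto
  with z'(2) vzw have "w' \<noteq> w" by auto
  with w' r0(2) have "deriv v w' \<noteq> 0"
    by (simp add: dist_commute)
  with z'(3) w' that show thesis
    by (metis dist_commute mem_ball min_less_iff_conj)
qed

lemma Aut_sub_fibre_eq:
  fixes u v :: "complex \<Rightarrow> complex"
  assumes hu: "u holomorphic_on UNIV" and hv: "v holomorphic_on UNIV"
    and nc: "\<not> (\<exists>c. \<forall>z. v z = c)" and A: "Aut_sub v u"
    and vzw: "v z = v w"
  shows "u z = u w"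
proof (rule ccontr)
  assume "u z \<noteq> u w"
  define e where "e = dist (u z) (u w)"
  have "e/2 > 0"
    using \<open>u z \<noteq> u w\<close> by (simp add: e_def)
  have "continuous_on UNIV u"
    using hu holomorphic_on_imp_continuous_on by blast
  then have cont: "\<exists>d>0. \<forall>\<zeta>. dist \<zeta> x < d \<longrightarrow> dist (u \<zeta>) (u x) < e/2" for x
    using \<open>e/2 > 0\<close> unfolding continuous_on_iff by blast
  obtain d1 where d1: "d1 > 0" "\<And>\<zeta>. dist \<zeta> z < d1 \<Longrightarrow> dist (u \<zeta>) (u z) < e/2"
    using cont[of z] by blast
  obtain d2 where d2: "d2 > 0" "\<And>\<zeta>. dist \<zeta> w < d2 \<Longrightarrow> dist (u \<zeta>) (u w) < e/2"
    using cont[of w] by blast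
  have "min d1 d2 > 0"
    using d1(1) d2(1) by simp
  with regular_fibre_pairs_nearby[OF hv nc vzw]
  obtain z' w' where "dist z' z < min d1 d2" "dist w' w < min d1 d2"
    and "v z' = v w'" "deriv v w' \<noteq> 0" .
  then have "u z' = u w'" and "dist (u z) (u z') < e/2" and "dist (u w) (u z') < e/2"
    using Aut_sub_eq_at_regular_point[OF hv A, of z' w'] d1(2)[of z'] d2(2)[of w']
    by (simp_all add: dist_commute)
  then have "dist (u z) (u w) < e"
    using dist_triangle_half_l by blast
  then show False
    by (simp add: e_def)
qed

lemma factor_continuous_at:
  fixes u v h :: "complex \<Rightarrow> complex"
  assumes hu: "continuous_on UNIV u" and hv: "v holomorphic_on UNIV"
    and nc: "\<not> (\<exists>c. \<forall>z. v z = c)" and hvu: "\<And>z. h (v z) = u z"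
  shows "isCont h (v z)"
  unfolding continuous_at_eps_delta
proof (intro allI impI)
  fix e :: real
  assume "e > 0"
  then obtain d where d: "d > 0" "\<And>\<zeta>. dist \<zeta> z < d \<Longrightarrow> dist (u \<zeta>) (u z) < e"
    using hu unfolding continuous_on_iff by blast
  have "open (v ` ball z d)"
    by (rule entire_nonconstant_open_image[OF hv nc open_ball])
  moreover have "v z \<in> v ` ball z d"
    using d(1) by simp
  ultimately obtain d' where "d' > 0" "ball (v z) d' \<subseteq> v ` ball z d"
    using openE by blast
  then have "dist (h y) (h (v z)) < e" if "dist y (v z) < d'" for y
    using that d(2) hvu by (fastforce simp: dist_commute)
  with \<open>d' > 0\<close> show "\<exists>d>0. \<forall>y. dist y (v z) < d \<longrightarrow> dist (h y) (h (v z)) < e"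
    by blast
qed

lemma factor_differentiable_at_regular_value:
  fixes u v h :: "complex \<Rightarrow> complex"
  assumes hu: "u holomorphic_on UNIV" and hv: "v holomorphic_on UNIV"
    and hvu: "\<And>z. h (v z) = u z" and reg: "deriv v \<zeta> \<noteq> 0"
  shows "h field_differentiable at (v \<zeta>)"
proof -
  obtain r g where r: "r > 0" and oV: "open (v ` ball \<zeta> r)"
    and g: "g holomorphic_on v ` ball \<zeta> r" "\<And>\<xi>. \<xi> \<in> ball \<zeta> r \<Longrightarrow> g (v \<xi>) = \<xi>"
    using holomorphic_local_inverse[OF hv open_UNIV UNIV_I reg] by metis
  have "u \<circ> g holomorphic_on v ` ball \<zeta> r"
    using g(1) hu by (intro holomorphic_on_compose_gen[where t = UNIV]) auto
  then have "h holomorphic_on v ` ball \<zeta> r"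
    by (rule holomorphic_transform) (use g(2) hvu in auto)
  with oV r show ?thesis
    using holomorphic_on_imp_differentiable_at by simp
qed

lemma factor_holomorphic_on_range:
  fixes u v h :: "complex \<Rightarrow> complex"
  assumes hu: "u holomorphic_on UNIV" and hv: "v holomorphic_on UNIV"
    and nc: "\<not> (\<exists>c. \<forall>z. v z = c)" and hvu: "\<And>z. h (v z) = u z"
  shows "h holomorphic_on range v"
  unfolding holomorphic_on_def
proof (rule ballI, rule field_differentiable_at_within)
  fix y assume "y \<in> range v"
  then obtain z0 where y: "y = v z0" by blast
  obtain \<rho> where \<rho>: "\<rho> > 0" "\<And>\<zeta>. \<zeta> \<noteq> z0 \<Longrightarrow> dist \<zeta> z0 < \<rho> \<Longrightarrow> deriv v \<zeta> \<noteq> 0"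
    using entire_nonconstant_critical_points_isolated[OF hv nc, where a = z0] by blast
  define W where "W = v ` ball z0 \<rho>"
  have "open W"
    unfolding W_def by (rule entire_nonconstant_open_image[OF hv nc open_ball])
  have "continuous_on W h"
    using factor_continuous_at[OF holomorphic_on_imp_continuous_on[OF hu] hv nc hvu]
    unfolding W_def by (intro continuous_at_imp_continuous_on) blast
  moreover have "h holomorphic_on W - {y}"
    unfolding holomorphic_on_def
  proof (rule ballI, rule field_differentiable_at_within)
    fix y' assume "y' \<in> W - {y}"
    then obtain \<zeta> where "y' = v \<zeta>" "dist \<zeta> z0 < \<rho>" "\<zeta> \<noteq> z0"
      unfolding W_def y by (metis DiffE image_iff insertCI mem_ball dist_commute)
    then show "h field_differentiable at y'"
      using \<rho>(2) factor_differentiable_at_regular_value[OF hu hv hvu] by blast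
  qed
  ultimately have "h holomorphic_on W"
    using no_isolated_singularity[OF _ _ \<open>open W\<close>, of h "{y}"] by simp
  moreover have "y \<in> W"
    unfolding W_def y using \<rho>(1) by simp
  ultimately show "h field_differentiable at y"
    using \<open>open W\<close> holomorphic_on_imp_differentiable_at by blast
qed

theorem lemma1:
  fixes u v :: "complex \<Rightarrow> complex"
  assumes "u holomorphic_on UNIV" and "v holomorphic_on UNIV"
    and "\<not> (\<exists>c. \<forall>z. u z = c)" and "\<not> (\<exists>c. \<forall>z. v z = c)"
    and "Aut_sub v u"
  shows "\<exists>h. h holomorphic_on (range v) \<and> (\<forall>z. u z = h (v z))"
proof -
  define h where "h y = u (SOME z. v z = y)" for y
  have hvu: "h (v z) = u z" for z
  proof -
    have "v (SOME z'. v z' = v z) = v z"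
      by (rule someI) simp
    then show ?thesis
      unfolding h_def using Aut_sub_fibre_eq[OF assms(1,2,4,5)] by metis
  qed
  then have "h holomorphic_on range v"
    using factor_holomorphic_on_range[OF assms(1,2,4)] by blast
  with hvu show ?thesis
    by metis
qed

end
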